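(* In the general model, the random measure $\mu$ is either almost surely absolutely continuous with respect to Lebesgue measure, or almost surely purely singular with respect to Lebesgue measure.
   Context: General model. Let $\ell\ge 2$ and let $T=\{1,\dots,\ell\}^*$ be the set of finite words over $\{1,\dots,\ell\}$ (the rooted $\ell$-regular tree; $v|j$ is the prefix of $v$ of length $j$). Let $D\subset\mathbb{R}$ be a finite set and $\eta=\sum_{d\in D}p_d\delta_d$ a probability measure on $D$. Let $\{a_v\}_{v\in T,\,|v|\ge 1}$ be i.i.d. random variables with law $\eta$. Fix $\lambda\in(0,1)$. For $\omega\in\{1,\dots,\ell\}^{\mathbb{N}}$ put $f(\omega)=\sum_{j\ge1}a_{\omega|j}\lambda^j$. The random probability measure $\mu$ is the image under $f$ of the uniform product measure $(\frac1\ell,\dots,\frac1\ell)^{\mathbb{N}}$ on $\{1,\dots,\ell\}^{\mathbb{N}}$. *)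

theory Defs
  imports "HOL-Probability.Probability"
begin

text \<open>Vertices of the rooted l-regular tree other than the root: nonempty finite
  words over the alphabet {1..l}.\<close>
definition tree_vertices :: "nat \<Rightarrow> nat list set" where
  "tree_vertices l = {v. v \<noteq> [] \<and> set v \<subseteq> {1..l}}"

definition label_space :: "nat \<Rightarrow> real pmf \<Rightarrow> (nat list \<Rightarrow> real) measure" where
  "label_space l eta = PiM (tree_vertices l) (\<lambda>_. measure_pmf eta)"

definition symbol_space :: "nat \<Rightarrow> (nat \<Rightarrow> nat) measure" where
  "symbol_space l = PiM UNIV (\<lambda>_. measure_pmf (pmf_of_set {1..l}))"

definition prefix_of :: "(nat \<Rightarrow> nat) \<Rightarrow> nat \<Rightarrow> nat list" where
  "prefix_of w j = map w [0..<j]"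

definition coding_map :: "real \<Rightarrow> (nat list \<Rightarrow> real) \<Rightarrow> (nat \<Rightarrow> nat) \<Rightarrow> real" where
  "coding_map lam a w = (\<Sum>j. a (prefix_of w (Suc j)) * lam ^ Suc j)"

definition random_measure :: "nat \<Rightarrow> real \<Rightarrow> (nat list \<Rightarrow> real) \<Rightarrow> real measure" where
  "random_measure l lam a = distr (symbol_space l) lborel (coding_map lam a)"

definition singular_lebesgue :: "real measure \<Rightarrow> bool" where
  "singular_lebesgue m \<longleftrightarrow>
     (\<exists>A \<in> sets borel. emeasure lborel A = 0 \<and> emeasure m (UNIV - A) = 0)"

end

theory Submission
  imports Defs
begin

text \<open>
  Write s(a) for the largest mass that the measure \<mu> built from the labels a gives to a
  Lebesgue null set. The measure \<mu> is the average of the images of the l subtree measures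
  under the affine maps x \<mapsto> \<lambda> (a_i + x), and affine maps preserve null sets, so s(a) is
  the average of the values of s on the l subtrees, which are independent copies of s(a).
  A bounded random variable that is the mean of l \<ge> 2 independent copies of itself has zero
  variance, so s = m almost surely.

  To see that m is 0 or 1, take labels a with s = m on every subtree and a null set N with
  \<mu>(N) = m. The recursion forces each subtree measure to give mass m to the matching affine
  copy of N, so the event {f \<in> N} of the symbol space has probability m / l^n in every
  cylinder of length n: it is independent of all cylinders, hence of itself. Now s = 0 means
  that \<mu> is absolutely continuous, and s = 1 that \<mu> is singular.
\<close>

section \<open>Mass of a measure on Lebesgue null sets\<close>

lemma null_sets_lborel_in_sets_borel: "N \<in> null_sets lborel \<Longrightarrow> N \<in> sets borel"
  using null_setsD2[of N lborel] by simp

lemma affine_vimage_in_sets_borel: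
  fixes t c :: real
  assumes "A \<in> sets borel"
  shows "{x. t + c * x \<in> A} \<in> sets borel"
  using measurable_sets[of "\<lambda>x. t + c * x" borel borel A] assms by (simp add: vimage_def)

lemma null_sets_lborel_affine_vimage:
  fixes t c :: real
  assumes "c \<noteq> 0" "N \<in> null_sets lborel"
  shows "{x. t + c * x \<in> N} \<in> null_sets lborel"
proof -
  have N: "N \<in> sets borel" using null_setsD2[OF assms(2)] by simp
  have "AE x in lborel. t + c * x \<notin> N"
    using N AE_not_in[OF assms(2)] by (intro AE_borel_affine[OF assms(1)]) auto
  then show ?thesis
    using AE_iff_null_sets[of "{x. t + c * x \<in> N}" lborel] affine_vimage_in_sets_borel[OF N] by simp
qed

definition singular_mass :: "real measure \<Rightarrow> ennreal" where
  "singular_mass \<nu> = (SUP N\<in>null_sets lborel. emeasure \<nu> N)"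

lemma emeasure_le_singular_mass: "N \<in> null_sets lborel \<Longrightarrow> emeasure \<nu> N \<le> singular_mass \<nu>"
  unfolding singular_mass_def by (rule SUP_upper)

lemma singular_mass_attained:
  assumes "sets \<nu> = sets borel"
  obtains N where "N \<in> null_sets lborel" "emeasure \<nu> N = singular_mass \<nu>"
proof -
  let ?A = "emeasure \<nu> ` null_sets lborel"
  obtain f :: "nat \<Rightarrow> ennreal" where f: "range f \<subseteq> ?A" "Sup ?A = Sup (range f)"
    using ennreal_Sup_countable_SUP[of ?A] by auto
  have "\<forall>k. \<exists>N. N \<in> null_sets lborel \<and> f k = emeasure \<nu> N" using f(1) by blast
  then obtain Nk where Nk: "\<And>k. Nk k \<in> null_sets lborel" "\<And>k. f k = emeasure \<nu> (Nk k)"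
    by metis
  let ?N = "\<Union>k. Nk k"
  have null: "?N \<in> null_sets lborel" using Nk(1) by blast
  have "singular_mass \<nu> = Sup (range f)" unfolding singular_mass_def using f(2) by simp
  also have "\<dots> \<le> emeasure \<nu> ?N"
    using null_setsD2[OF null] assms by (auto simp: Nk(2) intro!: SUP_least emeasure_mono)
  finally show ?thesis
    using that[OF null] emeasure_le_singular_mass[OF null, of \<nu>] by (simp add: antisym)
qed

lemma absolutely_continuous_if_singular_mass_eq_0:
  assumes "sets \<nu> = sets borel" "singular_mass \<nu> = 0"
  shows "absolutely_continuous lborel \<nu>"
  unfolding absolutely_continuous_def
proof
  fix N :: "real set" assume N: "N \<in> null_sets lborel"
  then have "emeasure \<nu> N = 0" using emeasure_le_singular_mass[OF N, of \<nu>] assms(2) by simp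
  then show "N \<in> null_sets \<nu>" using null_setsD2[OF N] assms(1) by (simp add: null_setsI)
qed

lemma singular_lebesgue_if_singular_mass_eq_1:
  assumes "prob_space \<nu>" "sets \<nu> = sets borel" "singular_mass \<nu> = 1"
  shows "singular_lebesgue \<nu>"
proof -
  interpret prob_space \<nu> by fact
  obtain N where N: "N \<in> null_sets lborel" "emeasure \<nu> N = 1"
    using singular_mass_attained[OF assms(2)] assms(3) by metis
  have "N \<in> sets \<nu>" using null_setsD2[OF N(1)] assms(2) by simp
  then have "emeasure \<nu> (space \<nu> - N) = 0"
    using prob_compl[of N] N(2) by (simp add: emeasure_eq_measure)
  moreover have "space \<nu> = UNIV" using sets_eq_imp_space_eq[OF assms(2)] by simp
  ultimately show ?thesis
    unfolding singular_lebesgue_def using N(1) null_setsD2[OF N(1)]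
    by (intro bexI[of _ N]) auto
qed

lemma ennreal_enn2real_singular_mass:
  assumes "finite_measure \<nu>" "sets \<nu> = sets borel"
  shows "ennreal (enn2real (singular_mass \<nu>)) = singular_mass \<nu>"
proof -
  interpret finite_measure \<nu> by fact
  obtain N where "emeasure \<nu> N = singular_mass \<nu>"
    using singular_mass_attained[OF assms(2)] by metis
  then have "singular_mass \<nu> = ennreal (measure \<nu> N)" by (simp add: emeasure_eq_measure)
  then show ?thesis by simp
qed

lemma measure_le_singular_mass:
  assumes "finite_measure \<nu>" "sets \<nu> = sets borel" "N \<in> null_sets lborel"
  shows "measure \<nu> N \<le> enn2real (singular_mass \<nu>)"
  using emeasure_le_singular_mass[OF assms(3), of \<nu>] ennreal_enn2real_singular_mass[OF assms(1,2)]
  by (simp add: finite_measure.emeasure_eq_measure[OF assms(1)] flip: ennreal_le_iff)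

definition rat_interval :: "rat \<times> rat \<Rightarrow> real set" where
  "rat_interval r = {real_of_rat (fst r)<..<real_of_rat (snd r)}"

definition rat_intervals_union :: "(rat \<times> rat) list \<Rightarrow> real set" where
  "rat_intervals_union xs = (\<Union>r\<in>set xs. rat_interval r)"

lemma rat_intervals_union_borel[measurable]: "rat_intervals_union xs \<in> sets borel"
  unfolding rat_intervals_union_def rat_interval_def by (intro sets.finite_UN) auto

lemma open_eq_incseq_rat_intervals_union:
  fixes G :: "real set"
  assumes "open G"
  obtains xs :: "nat \<Rightarrow> (rat \<times> rat) list"
  where "incseq (\<lambda>n. rat_intervals_union (xs n))" "(\<Union>n. rat_intervals_union (xs n)) = G"
proof
  define xs where "xs n = filter (\<lambda>r. rat_interval r \<subseteq> G) (map from_nat [0..<n])" for n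
  show "incseq (\<lambda>n. rat_intervals_union (xs n))"
    unfolding incseq_def rat_intervals_union_def xs_def
    by auto (meson atLeastLessThan_iff le_trans less_le_not_le zero_le)
  show "(\<Union>n. rat_intervals_union (xs n)) = G"
  proof
    show "(\<Union>n. rat_intervals_union (xs n)) \<subseteq> G"
      unfolding rat_intervals_union_def xs_def by auto
    show "G \<subseteq> (\<Union>n. rat_intervals_union (xs n))"
    proof
      fix x assume "x \<in> G"
      then obtain d where d: "d > 0" "ball x d \<subseteq> G" using assms open_contains_ball by blast
      obtain p :: rat where p: "x - d < of_rat p" "of_rat p < x" using of_rat_dense[of "x - d" x] d by auto
      obtain q :: rat where q: "x < of_rat q" "of_rat q < x + d" using of_rat_dense[of x "x + d"] d by auto
      have "rat_interval (p, q) \<subseteq> ball x d"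
        using p q by (auto simp: rat_interval_def dist_real_def)
      then have "(p, q) \<in> set (xs (Suc (to_nat (p, q))))"
        unfolding xs_def using d(2) by (auto simp: image_iff intro!: bexI[of _ "to_nat (p, q)"])
      moreover have "x \<in> rat_interval (p, q)"
        using p q by (simp add: rat_interval_def)
      ultimately show "x \<in> (\<Union>n. rat_intervals_union (xs n))"
        unfolding rat_intervals_union_def by blast
    qed
  qed
qed

definition small_rat_intervals_unions :: "nat \<Rightarrow> (rat \<times> rat) list set" where
  "small_rat_intervals_unions k = {xs. emeasure lborel (rat_intervals_union xs) < ennreal (1 / Suc k)}"

lemma singular_mass_le_INF_SUP_rat_intervals_union:
  assumes "sets \<nu> = sets borel"
  shows "singular_mass \<nu> \<le>
    (INF k. SUP xs\<in>small_rat_intervals_unions k. emeasure \<nu> (rat_intervals_union xs))"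
  unfolding singular_mass_def
proof (intro SUP_least INF_greatest)
  fix N :: "real set" and k :: nat assume N: "N \<in> null_sets lborel"
  have "N \<in> sets lebesgue" using null_setsD2[OF N] by simp
  moreover have "(0::real) < 1 / Suc k" by simp
  ultimately obtain G where G: "open G" "N \<subseteq> G" "emeasure lebesgue (G - N) < ennreal (1 / Suc k)"
    by (rule sets_lebesgue_outer_open)
  have GN: "G - N \<in> sets borel" using G(1) null_setsD2[OF N] by auto
  have "emeasure lborel G \<le> emeasure lborel ((G - N) \<union> N)"
    using G(1) null_setsD2[OF N] by (intro emeasure_mono) auto
  also have "\<dots> \<le> emeasure lborel (G - N) + emeasure lborel N"
    using GN null_setsD2[OF N] by (intro emeasure_subadditive) auto
  also have "\<dots> = emeasure lebesgue (G - N)"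
    using GN null_setsD1[OF N] by simp
  finally have G_small: "emeasure lborel G < ennreal (1 / Suc k)"
    using G(3) by (rule le_less_trans)
  obtain xs where xs: "incseq (\<lambda>n. rat_intervals_union (xs n))"
    "(\<Union>n. rat_intervals_union (xs n)) = G"
    using open_eq_incseq_rat_intervals_union[OF G(1)] by blast
  have "emeasure \<nu> N \<le> emeasure \<nu> G"
    using G(1,2) assms by (intro emeasure_mono) auto
  also have "\<dots> = (SUP n. emeasure \<nu> (rat_intervals_union (xs n)))"
    using SUP_emeasure_incseq[of "\<lambda>n. rat_intervals_union (xs n)" \<nu>] xs assms
    by (auto simp: image_subset_iff)
  also have "\<dots> \<le> (SUP xs\<in>small_rat_intervals_unions k. emeasure \<nu> (rat_intervals_union xs))"
  proof (rule SUP_least)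
    fix n
    have "emeasure lborel (rat_intervals_union (xs n)) \<le> emeasure lborel G"
      using G(1) xs(2) by (intro emeasure_mono) auto
    then have "xs n \<in> small_rat_intervals_unions k"
      using G_small unfolding small_rat_intervals_unions_def by (simp add: le_less_trans)
    then show "emeasure \<nu> (rat_intervals_union (xs n))
        \<le> (SUP xs\<in>small_rat_intervals_unions k. emeasure \<nu> (rat_intervals_union xs))"
      by (rule SUP_upper)
  qed
  finally show "emeasure \<nu> N
      \<le> (SUP xs\<in>small_rat_intervals_unions k. emeasure \<nu> (rat_intervals_union xs))" .
qed

lemma INF_SUP_rat_intervals_union_le_singular_mass:
  assumes "finite_measure \<nu>" "sets \<nu> = sets borel"
  shows "(INF k. SUP xs\<in>small_rat_intervals_unions k. emeasure \<nu> (rat_intervals_union xs))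
    \<le> singular_mass \<nu>"
proof (rule dense_le)
  interpret finite_measure \<nu> by fact
  fix r assume r: "r < (INF k. SUP xs\<in>small_rat_intervals_unions k. emeasure \<nu> (rat_intervals_union xs))"
  have "\<exists>xs\<in>small_rat_intervals_unions (2 ^ k). r < emeasure \<nu> (rat_intervals_union xs)" for k
    using less_INF_D[OF r UNIV_I] by (simp add: less_SUP_iff)
  then obtain xs where xs: "\<And>k. xs k \<in> small_rat_intervals_unions (2 ^ k)"
    "\<And>k. r < emeasure \<nu> (rat_intervals_union (xs k))"
    by metis
  define A where "A k = rat_intervals_union (xs k)" for k
  have A_borel[measurable]: "A k \<in> sets borel" for k
    unfolding A_def by simp
  have A_small: "emeasure lborel (A k) < ennreal ((1 / 2) ^ k)" for k
  proof -
    have "(1::real) / Suc (2 ^ k) \<le> 1 / 2 ^ k"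
      by (intro divide_left_mono) (auto simp: add_pos_pos)
    then have "ennreal (1 / Suc (2 ^ k)) \<le> ennreal ((1 / 2) ^ k)"
      by (intro ennreal_leI) (simp add: power_divide)
    moreover have "emeasure lborel (A k) < ennreal (1 / Suc (2 ^ k))"
      using xs(1)[of k] by (simp add: small_rat_intervals_unions_def A_def)
    ultimately show ?thesis by (rule order_less_le_trans[rotated])
  qed
  have A_finite: "emeasure lborel (A k) < \<infinity>" for k
    using less_trans[OF A_small[of k] ennreal_less_top] by simp
  have "measure lborel (A k) \<le> (1 / 2) ^ k" for k
    unfolding measure_def using A_small[of k] by (intro enn2real_leI) auto
  then have "summable (\<lambda>k. measure lborel (A k))"
    by (intro summable_comparison_test'[OF summable_geometric[of "1 / 2"]]) auto
  then have null: "limsup A \<in> null_sets lborel"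
    using A_finite by (intro borel_cantelli_limsup1) auto
  have tails: "(\<Union>m\<in>{n..}. A m) \<in> sets \<nu>" for n
    using assms(2) by (auto intro!: sets.countable_UN')
  have "r \<le> (INF n. emeasure \<nu> (\<Union>m\<in>{n..}. A m))"
  proof (rule INF_greatest)
    fix n
    have "r \<le> emeasure \<nu> (A n)" using xs(2)[of n] unfolding A_def by simp
    also have "\<dots> \<le> emeasure \<nu> (\<Union>m\<in>{n..}. A m)" using tails[of n] by (intro emeasure_mono) auto
    finally show "r \<le> emeasure \<nu> (\<Union>m\<in>{n..}. A m)" .
  qed
  also have "\<dots> = emeasure \<nu> (\<Inter>n. \<Union>m\<in>{n..}. A m)"
    using tails by (intro INF_emeasure_decseq') (auto simp: decseq_def intro: le_trans)
  also have "\<dots> \<le> singular_mass \<nu>"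
    using emeasure_le_singular_mass[OF null] by (simp add: limsup_INF_SUP)
  finally show "r \<le> singular_mass \<nu>" .
qed

lemma singular_mass_eq_INF_SUP_rat_intervals_union:
  assumes "finite_measure \<nu>" "sets \<nu> = sets borel"
  shows "singular_mass \<nu> =
    (INF k. SUP xs\<in>small_rat_intervals_unions k. emeasure \<nu> (rat_intervals_union xs))"
  using singular_mass_le_INF_SUP_rat_intervals_union[OF assms(2)]
    INF_SUP_rat_intervals_union_le_singular_mass[OF assms] by (rule antisym)

lemma measurable_singular_mass:
  assumes "\<And>x. x \<in> space M \<Longrightarrow> finite_measure (\<nu> x)"
    and "\<And>x. x \<in> space M \<Longrightarrow> sets (\<nu> x) = sets borel"
    and "\<And>A. A \<in> sets borel \<Longrightarrow> (\<lambda>x. emeasure (\<nu> x) A) \<in> borel_measurable M"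
  shows "(\<lambda>x. singular_mass (\<nu> x)) \<in> borel_measurable M"
proof (subst measurable_cong)
  show "singular_mass (\<nu> x) =
      (INF k. SUP xs\<in>small_rat_intervals_unions k. emeasure (\<nu> x) (rat_intervals_union xs))"
    if "x \<in> space M" for x
    using assms(1,2)[OF that] by (rule singular_mass_eq_INF_SUP_rat_intervals_union)
  show "(\<lambda>x. INF k. SUP xs\<in>small_rat_intervals_unions k. emeasure (\<nu> x) (rat_intervals_union xs))
      \<in> borel_measurable M"
    by (intro borel_measurable_INF borel_measurable_SUP assms(3) rat_intervals_union_borel)
      auto
qed

section \<open>Averages and independent copies\<close>

lemma eq_if_mean_eq_upper_bound:
  fixes x :: "'a \<Rightarrow> real"
  assumes "finite A" "i \<in> A" "\<And>j. j \<in> A \<Longrightarrow> x j \<le> c" "(\<Sum>j\<in>A. x j) / card A = c"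
  shows "x i = c"
proof -
  have "(\<Sum>j\<in>A. c - x j) = 0"
    using assms by (auto simp: sum_subtractf field_simps card_gt_0_iff)
  then have "\<forall>j\<in>A. c - x j = 0"
    using assms by (subst (asm) sum_nonneg_eq_0_iff) auto
  then show ?thesis using assms(2) by simp
qed

lemma integral_comp_eq_if_distr_eq:
  fixes X Y :: "'a \<Rightarrow> real" and f :: "real \<Rightarrow> real"
  assumes X: "X \<in> borel_measurable M" and Y: "Y \<in> borel_measurable M"
    and distr: "distr M borel X = distr M borel Y" and f: "f \<in> borel_measurable borel"
  shows "integrable M (\<lambda>x. f (X x)) \<longleftrightarrow> integrable M (\<lambda>x. f (Y x))"
    and "(\<integral>x. f (X x) \<partial>M) = (\<integral>x. f (Y x) \<partial>M)"
proof -
  have "integrable M (\<lambda>x. f (X x)) = integrable (distr M borel X) f"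
    by (rule integrable_distr_eq[OF X f, symmetric])
  also have "\<dots> = integrable M (\<lambda>x. f (Y x))"
    unfolding distr by (rule integrable_distr_eq[OF Y f])
  finally show "integrable M (\<lambda>x. f (X x)) \<longleftrightarrow> integrable M (\<lambda>x. f (Y x))" .
  have "(\<integral>x. f (X x) \<partial>M) = integral\<^sup>L (distr M borel X) f"
    by (rule integral_distr[OF X f, symmetric])
  also have "\<dots> = (\<integral>x. f (Y x) \<partial>M)"
    unfolding distr by (rule integral_distr[OF Y f])
  finally show "(\<integral>x. f (X x) \<partial>M) = (\<integral>x. f (Y x) \<partial>M)" .
qed

lemma (in prob_space) expectation_square_of_mean:
  fixes Z :: "'i \<Rightarrow> 'a \<Rightarrow> real"
  assumes I: "finite I" "I \<noteq> {}"
    and indep: "indep_vars (\<lambda>_. borel) Z I"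
    and Z_sq: "\<And>i. i \<in> I \<Longrightarrow> integrable M (\<lambda>x. Z i x ^ 2)"
    and Z_mean: "\<And>i. i \<in> I \<Longrightarrow> expectation (Z i) = m"
    and Z_second: "\<And>i. i \<in> I \<Longrightarrow> expectation (\<lambda>x. Z i x ^ 2) = q"
  shows "expectation (\<lambda>x. ((\<Sum>i\<in>I. Z i x) / card I)\<^sup>2) = m\<^sup>2 + (q - m\<^sup>2) / card I"
proof -
  define n where "n = real (card I)"
  have n: "n > 0" using I unfolding n_def by (simp add: card_gt_0_iff)
  have Z_int: "integrable M (Z i)" if "i \<in> I" for i
  proof (rule square_integrable_imp_integrable[OF _ Z_sq[OF that]])
    show "Z i \<in> borel_measurable M" using indep that unfolding indep_vars_def by blast
  qed
  have pair: "integrable M (\<lambda>x. Z i x * Z j x) \<and>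
      expectation (\<lambda>x. Z i x * Z j x) = m * m + (if i = j then q - m * m else 0)"
    if ij: "i \<in> I" "j \<in> I" for i j
  proof (cases "i = j")
    case True
    then show ?thesis using Z_sq[OF ij(1)] Z_second[OF ij(1)] by (simp add: power2_eq_square)
  next
    case False
    have "indep_vars (\<lambda>_. borel) Z {i, j}"
      using indep_vars_subset[OF indep] ij by auto
    then have "integrable M (\<lambda>x. \<Prod>k\<in>{i, j}. Z k x) \<and>
        expectation (\<lambda>x. \<Prod>k\<in>{i, j}. Z k x) = (\<Prod>k\<in>{i, j}. expectation (Z k))"
      using ij Z_int by (intro conjI indep_vars_lebesgue_integral indep_vars_integrable) auto
    then show ?thesis using False ij Z_mean by simp
  qed
  have "expectation (\<lambda>x. ((\<Sum>i\<in>I. Z i x) / card I)\<^sup>2) =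
      expectation (\<lambda>x. (\<Sum>i\<in>I. \<Sum>j\<in>I. Z i x * Z j x) / n\<^sup>2)"
    by (simp add: n_def power_divide power2_eq_square sum_product)
  also have "\<dots> = (\<Sum>i\<in>I. \<Sum>j\<in>I. expectation (\<lambda>x. Z i x * Z j x)) / n\<^sup>2"
    using pair by (simp add: Bochner_Integration.integral_sum)
  also have "\<dots> = (\<Sum>i\<in>I. \<Sum>j\<in>I. m * m + (if i = j then q - m * m else 0)) / n\<^sup>2"
    using pair by simp
  also have "\<dots> = (n * n * (m * m) + n * (q - m * m)) / n\<^sup>2"
    using I(1) by (simp add: sum.distrib n_def algebra_simps)
  also have "\<dots> = m\<^sup>2 + (q - m\<^sup>2) / n"
    using n by (simp add: field_simps power2_eq_square)
  finally show ?thesis unfolding n_def .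
qed

lemma (in prob_space) AE_eq_expectation_if_mean_of_independent_copies:
  fixes X :: "'a \<Rightarrow> real" and Z :: "'i \<Rightarrow> 'a \<Rightarrow> real"
  assumes I: "finite I" "2 \<le> card I"
    and indep: "indep_vars (\<lambda>_. borel) Z I"
    and copies: "\<And>i. i \<in> I \<Longrightarrow> distr M borel (Z i) = distr M borel X"
    and X: "X \<in> borel_measurable M" and X_sq: "integrable M (\<lambda>x. X x ^ 2)"
    and mean: "AE x in M. X x = (\<Sum>i\<in>I. Z i x) / card I"
  shows "AE x in M. X x = expectation X"
proof -
  define m where "m = expectation X"
  define q where "q = expectation (\<lambda>x. X x ^ 2)"
  have I_ne: "I \<noteq> {}" using I(2) by auto
  have Z: "Z i \<in> borel_measurable M" if "i \<in> I" for i
    using indep that unfolding indep_vars_def by blast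
  have X_int: "integrable M X"
    by (rule square_integrable_imp_integrable[OF X X_sq])
  note copy = integral_comp_eq_if_distr_eq[OF Z X copies]
  have "(\<lambda>x. ((\<Sum>i\<in>I. Z i x) / card I)\<^sup>2) \<in> borel_measurable M"
    using Z by (intro borel_measurable_power borel_measurable_divide borel_measurable_sum) auto
  moreover have "AE x in M. X x ^ 2 = ((\<Sum>i\<in>I. Z i x) / card I)\<^sup>2"
    using mean by eventually_elim simp
  ultimately have "q = expectation (\<lambda>x. ((\<Sum>i\<in>I. Z i x) / card I)\<^sup>2)"
    unfolding q_def by (rule integral_cong_AE[OF borel_measurable_power[OF X]])
  also have "\<dots> = m\<^sup>2 + (q - m\<^sup>2) / card I"
    using copy[of _ "\<lambda>y. y"] copy[of _ "\<lambda>y. y ^ 2"] X_int X_sq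
    by (intro expectation_square_of_mean I(1) I_ne indep) (auto simp: m_def q_def)
  finally have "q * card I = m\<^sup>2 * card I + (q - m\<^sup>2)"
    using I(2) by (simp add: field_simps)
  then have "(real (card I) - 1) * (q - m\<^sup>2) = 0"
    by (simp add: algebra_simps)
  then have "q = m\<^sup>2"
    using I(2) by simp
  moreover have "expectation (\<lambda>x. (X x - m)\<^sup>2) = q - m\<^sup>2"
    using X_int X_sq unfolding q_def m_def
    by (simp add: power2_diff prob_space) (simp add: power2_eq_square)
  moreover have "integrable M (\<lambda>x. (X x - m)\<^sup>2)"
    using X_int X_sq by (simp add: power2_diff)
  ultimately have "AE x in M. (X x - m)\<^sup>2 = 0"
    by (subst integral_nonneg_eq_0_iff_AE[symmetric]) auto
  then show ?thesis unfolding m_def by (auto elim: eventually_mono)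
qed

lemma (in product_prob_space) indep_vars_PiM_components:
  assumes "I \<noteq> {}"
  shows "indep_vars M (\<lambda>i x. x i) I"
proof (subst indep_vars_iff_distr_eq_PiM'[OF assms])
  show "random_variable (M i) (\<lambda>x. x i)" if "i \<in> I" for i
    using that by (rule measurable_component_singleton)
  have "distr (Pi\<^sub>M I M) (Pi\<^sub>M I M) (\<lambda>x. \<lambda>i\<in>I. x i) = distr (Pi\<^sub>M I M) (Pi\<^sub>M I M) (\<lambda>x. x)"
    by (intro distr_cong) (auto simp: space_PiM)
  also have "\<dots> = Pi\<^sub>M I M"
    by simp
  also have "\<dots> = (\<Pi>\<^sub>M i\<in>I. distr (Pi\<^sub>M I M) (M i) (\<lambda>x. x i))"
    by (intro PiM_cong refl PiM_component[symmetric])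
  finally show "distr (Pi\<^sub>M I M) (Pi\<^sub>M I M) (\<lambda>x. \<lambda>i\<in>I. x i) =
      (\<Pi>\<^sub>M i\<in>I. distr (Pi\<^sub>M I M) (M i) (\<lambda>x. x i))" .
qed

section \<open>Uniform measure on infinite words\<close>

abbreviation uniform_streams :: "'a set \<Rightarrow> 'a stream measure" where
  "uniform_streams A \<equiv> stream_space (measure_pmf (pmf_of_set A))"

lemma prob_space_uniform_streams: "prob_space (uniform_streams A)"
  by (rule prob_space.prob_space_stream_space[OF prob_space_measure_pmf])

lemma sets_uniform_streams: "sets (uniform_streams A) = sets (stream_space (count_space UNIV))"
  by (rule sets_stream_space_cong) simp

lemma space_uniform_streams[simp]: "space (uniform_streams A) = UNIV"
  by (simp add: space_stream_space)

lemma emeasure_density_cmult_indicator: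
  assumes "E \<in> sets M" "B \<in> sets M"
  shows "emeasure (density M (\<lambda>x. ennreal c * indicator E x)) B = ennreal c * emeasure M (B \<inter> E)"
proof -
  have "emeasure (density M (\<lambda>x. ennreal c * indicator E x)) B =
      (\<integral>\<^sup>+x. ennreal c * indicator E x * indicator B x \<partial>M)"
    using assms by (intro emeasure_density) auto
  also have "\<dots> = (\<integral>\<^sup>+x. ennreal c * indicator (B \<inter> E) x \<partial>M)"
    by (intro nn_integral_cong) (auto split: split_indicator)
  also have "\<dots> = ennreal c * emeasure M (B \<inter> E)"
    using assms by (intro nn_integral_cmult_indicator) auto
  finally show ?thesis .
qed

context
  fixes A :: "'a set"
  assumes A: "finite A" "A \<noteq> {}"
begin

lemma AE_uniform_streams: "AE X in uniform_streams A. X \<in> streams A"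
proof -
  have "AE X in uniform_streams A. stream_all (\<lambda>x. x \<in> A) X"
    using A by (intro prob_space.AE_stream_all prob_space_measure_pmf)
      (auto simp: AE_measure_pmf_iff)
  then show ?thesis by (auto elim!: eventually_mono simp: streams_iff_sset)
qed

lemma measure_uniform_streams_streams_Int:
  assumes E: "E \<in> sets (uniform_streams A)"
  shows "measure (uniform_streams A) (streams A \<inter> E) = measure (uniform_streams A) E"
proof (rule measure_eq_AE)
  show "AE X in uniform_streams A. (X \<in> streams A \<inter> E) = (X \<in> E)"
    using AE_uniform_streams by eventually_elim auto
  have "streams A \<in> sets (uniform_streams A)"
    using sets_sstart[of A "[]"] sets_uniform_streams[of A] by simp
  then show "streams A \<inter> E \<in> sets (uniform_streams A)"
    using E by (rule sets.Int)
qed (rule E)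

lemma measure_uniform_streams_split:
  assumes E: "E \<in> sets (uniform_streams A)"
  shows "measure (uniform_streams A) E =
    (\<Sum>i\<in>A. measure (uniform_streams A) {X. i ## X \<in> E}) / card A"
proof -
  let ?S = "uniform_streams A"
  interpret S: prob_space ?S by (rule prob_space_uniform_streams)
  have "emeasure ?S E = (\<integral>\<^sup>+i. emeasure ?S {X. i ## X \<in> E} \<partial>measure_pmf (pmf_of_set A))"
    using prob_space.emeasure_stream_space[OF prob_space_measure_pmf E] by simp
  also have "\<dots> = (\<Sum>i\<in>A. ennreal (measure ?S {X. i ## X \<in> E})) / ennreal (card A)"
    using A by (simp add: nn_integral_pmf_of_set S.emeasure_eq_measure ennreal_of_nat_eq_real_of_nat)
  also have "\<dots> = ennreal ((\<Sum>i\<in>A. measure ?S {X. i ## X \<in> E}) / card A)"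
    using A by (simp add: divide_ennreal card_gt_0_iff sum_nonneg)
  finally show ?thesis
    by (simp add: S.emeasure_eq_measure sum_nonneg)
qed

lemma measure_uniform_streams_sstart_Cons_Int:
  assumes i: "i \<in> A" and E: "E \<in> sets (uniform_streams A)"
  shows "measure (uniform_streams A) (sstart A (i # v) \<inter> E) =
    measure (uniform_streams A) (sstart A v \<inter> {X. i ## X \<in> E}) / card A"
proof -
  let ?S = "uniform_streams A"
  have "sstart A (i # v) \<inter> E \<in> sets ?S"
    using E sets_sstart[of A "i # v"] sets_uniform_streams[of A] by auto
  then have "measure ?S (sstart A (i # v) \<inter> E) =
      (\<Sum>j\<in>A. measure ?S {X. j ## X \<in> sstart A (i # v) \<inter> E}) / card A"
    by (rule measure_uniform_streams_split)
  also have "(\<Sum>j\<in>A. measure ?S {X. j ## X \<in> sstart A (i # v) \<inter> E}) =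
      (\<Sum>j\<in>A. if j = i then measure ?S (sstart A v \<inter> {X. i ## X \<in> E}) else 0)"
    by (intro sum.cong) (auto simp: Int_def)
  finally show ?thesis
    using i A(1) by simp
qed

lemma measure_uniform_streams_sstart:
  "v \<in> lists A \<Longrightarrow> measure (uniform_streams A) (sstart A v) = 1 / card A ^ length v"
proof (induction v)
  case Nil
  interpret S: prob_space "uniform_streams A" by (rule prob_space_uniform_streams)
  have "streams A \<in> sets (uniform_streams A)"
    using sets_sstart[of A "[]"] sets_uniform_streams[of A] by simp
  then show ?case
    using S.prob_eq_1 AE_uniform_streams by simp
next
  case (Cons i v)
  have "measure (uniform_streams A) (sstart A (i # v)) =
      measure (uniform_streams A) (sstart A v) / card A"
    using measure_uniform_streams_sstart_Cons_Int[of i UNIV v] Cons.prems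
      sets.top[of "uniform_streams A"] by simp
  then show ?case
    using Cons by (simp add: mult.commute)
qed

lemma measure_uniform_streams_eq_0_or_1:
  assumes E: "E \<in> sets (uniform_streams A)"
    and indep: "\<And>v. v \<in> lists A \<Longrightarrow> measure (uniform_streams A) (sstart A v \<inter> E) =
      measure (uniform_streams A) E * measure (uniform_streams A) (sstart A v)"
  shows "measure (uniform_streams A) E = 0 \<or> measure (uniform_streams A) E = 1"
proof (cases "measure (uniform_streams A) E = 0")
  case False
  let ?S = "uniform_streams A"
  let ?p = "measure ?S E"
  interpret S: prob_space ?S by (rule prob_space_uniform_streams)
  have p: "?p > 0" using False by (simp add: zero_less_measure_iff)
  define M where "M = density ?S (\<lambda>X. ennreal (1 / ?p) * indicator E X)"
  have M_emeasure: "emeasure M B = ennreal (1 / ?p) * emeasure ?S (B \<inter> E)"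
    if "B \<in> sets ?S" for B
    unfolding M_def using E that by (rule emeasure_density_cmult_indicator)
  have "M = ?S"
  proof (rule stream_space_eq_sstart[of A])
    show "countable A" using A(1) by (rule countable_finite)
    show "prob_space M"
    proof
      show "emeasure M (space M) = 1"
        using M_emeasure[of UNIV] p E sets.top[of ?S]
        by (simp add: M_def S.emeasure_eq_measure Int_absorb1 flip: ennreal_mult)
    qed
    show "AE x in M. x \<in> streams A"
      unfolding M_def using AE_uniform_streams E by (subst AE_density) (auto elim!: eventually_mono)
    show "sets M = sets (stream_space (count_space UNIV))"
      unfolding M_def by (simp add: sets_uniform_streams)
    show "prob_space ?S" by (rule prob_space_uniform_streams)
    show "AE x in ?S. x \<in> streams A" by (rule AE_uniform_streams)
    show "sets ?S = sets (stream_space (count_space UNIV))" by (rule sets_uniform_streams)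
    fix v assume "v \<in> lists A"
    then show "emeasure M (sstart A v) = emeasure ?S (sstart A v)"
      using M_emeasure[of "sstart A v"] indep[of v] p sets_sstart[of A v]
      by (simp add: sets_uniform_streams S.emeasure_eq_measure mult.assoc flip: ennreal_mult)
  qed
  moreover have "UNIV - E \<in> sets ?S"
    using sets.compl_sets[OF E] by simp
  ultimately have "emeasure ?S (UNIV - E) = 0"
    using M_emeasure[of "UNIV - E"] by (simp add: Diff_Int_distrib2)
  then show ?thesis
    using S.prob_compl[OF E] by (simp add: S.emeasure_eq_measure)
qed simp

end

section \<open>The random measure\<close>

locale random_self_similar_measure =
  fixes l :: nat and eta :: "real pmf" and lam :: real
  assumes two_le_l: "2 \<le> l" and finite_support: "finite (set_pmf eta)"
    and lam_pos: "0 < lam" and lam_less_1: "lam < 1"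
begin

abbreviation T :: "nat list set" where "T \<equiv> tree_vertices l"
abbreviation L :: "(nat list \<Rightarrow> real) measure" where "L \<equiv> label_space l eta"
abbreviation S :: "nat stream measure" where "S \<equiv> uniform_streams {1..l}"
abbreviation \<mu> :: "(nat list \<Rightarrow> real) \<Rightarrow> real measure" where "\<mu> a \<equiv> random_measure l lam a"

definition stream_coding :: "(nat list \<Rightarrow> real) \<Rightarrow> nat stream \<Rightarrow> real" where
  "stream_coding a X = (\<Sum>j. a (stake (Suc j) X) * lam ^ Suc j)"

lemma prob_space_L: "prob_space L"
  unfolding label_space_def by (intro prob_space_PiM prob_space_measure_pmf)

lemma space_L: "space L = (\<Pi>\<^sub>E w\<in>T. UNIV)"
  unfolding label_space_def by (simp add: space_PiM)

lemma undefined_outside_T: "a \<in> space L \<Longrightarrow> w \<notin> T \<Longrightarrow> a w = undefined"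
  by (auto simp: space_L PiE_def extensional_def)

lemma measurable_label: "(\<lambda>a. a w) \<in> borel_measurable L"
proof (cases "w \<in> T")
  case True
  then have "(\<lambda>a. a w) \<in> measurable L (measure_pmf eta)"
    unfolding label_space_def by (rule measurable_component_singleton)
  then show ?thesis by (simp add: measurable_def)
next
  case False
  then show ?thesis
    using undefined_outside_T by (subst measurable_cong[where g="\<lambda>_. undefined"]) auto
qed

lemma measurable_stream_coding: "(\<lambda>(a, X). stream_coding a X) \<in> borel_measurable (L \<Otimes>\<^sub>M S)"
  unfolding stream_coding_def split_beta'
proof (intro borel_measurable_suminf borel_measurable_times borel_measurable_const)
  fix j
  have stake: "(\<lambda>p. stake (Suc j) (snd p)) \<in> measurable (L \<Otimes>\<^sub>M S) (count_space UNIV)"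
    using measurable_stake by (intro measurable_compose[OF measurable_snd])
      (simp add: measurable_cong_sets[OF sets_uniform_streams refl])
  have label: "(\<lambda>p. fst p w) \<in> borel_measurable (L \<Otimes>\<^sub>M S)" if "w \<in> UNIV" for w
    using measurable_compose[OF measurable_fst measurable_label] by (simp add: comp_def)
  show "(\<lambda>p. fst p (stake (Suc j) (snd p))) \<in> borel_measurable (L \<Otimes>\<^sub>M S)"
    using measurable_compose_countable'[OF label stake countableI_type] .
qed

lemma measurable_stream_coding_right:
  assumes "a \<in> space L" shows "stream_coding a \<in> borel_measurable S"
  using measurable_Pair2[OF measurable_stream_coding assms] by simp

lemma random_measure_eq_distr_streams:
  assumes "a \<in> space L"
  shows "\<mu> a = distr S lborel (stream_coding a)"
proof -
  have "stake n (to_stream w) = prefix_of w n" for w n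
    unfolding to_stream_def prefix_of_def by (intro nth_equalityI) auto
  then have coding: "coding_map lam a = stream_coding a \<circ> to_stream"
    by (simp add: fun_eq_iff coding_map_def stream_coding_def)
  have "distr S lborel (stream_coding a) =
      distr (distr (symbol_space l) S to_stream) lborel (stream_coding a)"
    unfolding symbol_space_def by (subst stream_space_eq_distr) simp
  also have "\<dots> = distr (symbol_space l) lborel (stream_coding a \<circ> to_stream)"
    unfolding symbol_space_def using measurable_stream_coding_right[OF assms]
    by (intro distr_distr measurable_to_stream) simp
  finally show ?thesis
    unfolding random_measure_def coding ..
qed

lemma prob_space_random_measure:
  assumes "a \<in> space L" shows "prob_space (\<mu> a)"
  unfolding random_measure_eq_distr_streams[OF assms]
  using measurable_stream_coding_right[OF assms]
  by (intro prob_space.prob_space_distr[OF prob_space_uniform_streams]) simp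

lemma sets_random_measure[simp]: "sets (\<mu> a) = sets borel"
  by (simp add: random_measure_def)

lemma emeasure_random_measure:
  assumes "a \<in> space L" "A \<in> sets borel"
  shows "emeasure (\<mu> a) A = emeasure S {X. stream_coding a X \<in> A}"
  unfolding random_measure_eq_distr_streams[OF assms(1)]
  using measurable_stream_coding_right[OF assms(1)] assms(2)
  by (subst emeasure_distr) (auto simp: vimage_def)

lemma measure_random_measure:
  assumes "a \<in> space L" "A \<in> sets borel"
  shows "measure (\<mu> a) A = measure S {X. stream_coding a X \<in> A}"
  using emeasure_random_measure[OF assms] by (simp add: measure_def)

lemma stream_coding_vimage_in_sets:
  assumes "a \<in> space L" "A \<in> sets borel"
  shows "{X. stream_coding a X \<in> A} \<in> sets S"
  using measurable_sets[OF measurable_stream_coding_right[OF assms(1)] assms(2)]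
  by (simp add: vimage_def)

lemma measurable_emeasure_random_measure:
  assumes "A \<in> sets borel"
  shows "(\<lambda>a. emeasure (\<mu> a) A) \<in> borel_measurable L"
proof -
  interpret S: prob_space S by (rule prob_space_uniform_streams)
  let ?Q = "{p \<in> space (L \<Otimes>\<^sub>M S). (\<lambda>(a, X). stream_coding a X) p \<in> A}"
  have "?Q \<in> sets (L \<Otimes>\<^sub>M S)"
    using measurable_sets[OF measurable_stream_coding assms] by (simp add: vimage_def Int_def conj_commute)
  then have "(\<lambda>a. emeasure S (Pair a -` ?Q)) \<in> borel_measurable L"
    by (rule S.measurable_emeasure_Pair)
  moreover have "emeasure S (Pair a -` ?Q) = emeasure (\<mu> a) A" if "a \<in> space L" for a
    using emeasure_random_measure[OF that assms] that by (simp add: space_pair_measure vimage_def)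
  ultimately show ?thesis
    by (subst measurable_cong[symmetric]) auto
qed

definition singular_weight :: "(nat list \<Rightarrow> real) \<Rightarrow> real" where
  "singular_weight a = enn2real (singular_mass (\<mu> a))"

lemma measurable_singular_weight: "singular_weight \<in> borel_measurable L"
proof -
  have "(\<lambda>a. singular_mass (\<mu> a)) \<in> borel_measurable L"
    using prob_space_random_measure measurable_emeasure_random_measure
    by (intro measurable_singular_mass) (auto simp: prob_space_def)
  then show ?thesis
    unfolding singular_weight_def by (rule borel_measurable_enn2real)
qed

lemma singular_weight_nonneg: "0 \<le> singular_weight a"
  by (simp add: singular_weight_def)

lemma singular_weight_le_1:
  assumes "a \<in> space L" shows "singular_weight a \<le> 1"
proof -
  interpret prob_space "\<mu> a" using prob_space_random_measure[OF assms] .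
  have "singular_mass (\<mu> a) \<le> 1"
    unfolding singular_mass_def by (intro SUP_least emeasure_le_1)
  then show ?thesis unfolding singular_weight_def by (simp add: enn2real_leI)
qed

lemma measure_le_singular_weight:
  assumes "a \<in> space L" "N \<in> null_sets lborel"
  shows "measure (\<mu> a) N \<le> singular_weight a"
  unfolding singular_weight_def
  using prob_space_random_measure[OF assms(1)] assms(2)
  by (intro measure_le_singular_mass) (auto simp: prob_space_def)

lemma singular_weight_attained:
  assumes "a \<in> space L"
  obtains N where "N \<in> null_sets lborel" "measure (\<mu> a) N = singular_weight a"
proof -
  interpret prob_space "\<mu> a" using prob_space_random_measure[OF assms] .
  obtain N where N: "N \<in> null_sets lborel" "emeasure (\<mu> a) N = singular_mass (\<mu> a)"
    using singular_mass_attained[of "\<mu> a"] by auto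
  have "measure (\<mu> a) N = singular_weight a"
    using arg_cong[where f=enn2real, OF N(2)] by (simp add: singular_weight_def emeasure_eq_measure)
  then show ?thesis using that N(1) by blast
qed

definition subtree :: "nat \<Rightarrow> (nat list \<Rightarrow> real) \<Rightarrow> nat list \<Rightarrow> real" where
  "subtree i a = restrict (\<lambda>w. a (i # w)) T"

definition supported :: "(nat list \<Rightarrow> real) \<Rightarrow> bool" where
  "supported a \<longleftrightarrow> a \<in> space L \<and> (\<forall>w\<in>T. a w \<in> set_pmf eta)"

lemma Cons_in_tree_vertices: "i \<in> {1..l} \<Longrightarrow> w \<in> T \<Longrightarrow> i # w \<in> T"
  unfolding tree_vertices_def by auto

lemma subtree_in_space: "subtree i a \<in> space L"
  unfolding subtree_def space_L by auto

lemma subtree_apply: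
  assumes "a \<in> space L" "i \<in> {1..l}" "w \<noteq> []"
  shows "subtree i a w = a (i # w)"
proof (cases "w \<in> T")
  case False
  then have "i # w \<notin> T" using assms(2,3) unfolding tree_vertices_def by auto
  then show ?thesis
    using False undefined_outside_T[OF assms(1)] undefined_outside_T[OF subtree_in_space] by metis
qed (simp add: subtree_def)

lemma measurable_subtree: "i \<in> {1..l} \<Longrightarrow> subtree i \<in> measurable L L"
  unfolding subtree_def label_space_def
  by (intro measurable_restrict measurable_component_singleton Cons_in_tree_vertices)

lemma distr_subtree:
  assumes "i \<in> {1..l}" shows "distr L L (subtree i) = L"
proof -
  have "(\<lambda>w. i # w) \<in> T \<rightarrow> T" using Cons_in_tree_vertices[OF assms] by blast
  then show ?thesis
    using distr_PiM_reindex[of T "\<lambda>_. measure_pmf eta" "\<lambda>w. i # w" T]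
    unfolding subtree_def label_space_def by (simp add: prob_space_measure_pmf inj_on_def)
qed

lemma AE_supported: "AE a in L. supported a"
proof -
  have "countable T" by (rule countableI_type)
  moreover have "AE a in L. a w \<in> set_pmf eta" if "w \<in> T" for w
    unfolding label_space_def using that
    by (intro AE_PiM_component) (auto simp: prob_space_measure_pmf AE_measure_pmf_iff)
  ultimately have "AE a in L. \<forall>w\<in>T. a w \<in> set_pmf eta"
    by (simp add: AE_ball_countable)
  then show ?thesis unfolding supported_def by (auto elim: eventually_mono)
qed

lemma supported_subtree: "supported a \<Longrightarrow> i \<in> {1..l} \<Longrightarrow> supported (subtree i a)"
  unfolding supported_def using subtree_in_space by (auto simp: subtree_def Cons_in_tree_vertices)

lemma supported_bounded:
  assumes "supported a" obtains B where "\<And>w. \<bar>a w\<bar> \<le> B"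
proof -
  have "\<bar>a w\<bar> \<le> Max (abs ` insert undefined (set_pmf eta))" for w
  proof (rule Max_ge)
    \<comment> \<open>Off the tree the labels take the junk value undefined.\<close>
    have "a w \<in> insert undefined (set_pmf eta)"
      using assms undefined_outside_T[of a w] unfolding supported_def by (cases "w \<in> T") auto
    then show "\<bar>a w\<bar> \<in> abs ` insert undefined (set_pmf eta)" by blast
  qed (simp add: finite_support)
  then show ?thesis using that by blast
qed

lemma summable_stream_coding:
  assumes "supported a" shows "summable (\<lambda>j. a (stake (Suc j) X) * lam ^ Suc j)"
proof -
  obtain B where B: "\<And>w. \<bar>a w\<bar> \<le> B" using supported_bounded[OF assms] by blast
  show ?thesis
  proof (rule summable_comparison_test')
    show "summable (\<lambda>j. B * lam ^ Suc j)"
      using lam_pos lam_less_1 by (intro summable_mult summable_Suc_iff[THEN iffD2] summable_geometric) auto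
    show "norm (a (stake (Suc j) X) * lam ^ Suc j) \<le> B * lam ^ Suc j" for j
      using B lam_pos by (simp add: abs_mult mult_right_mono)
  qed
qed

lemma stream_coding_Cons:
  assumes "supported a" "i \<in> {1..l}"
  shows "stream_coding a (i ## X) = lam * (a [i] + stream_coding (subtree i a) X)"
proof -
  have a: "a \<in> space L" using assms(1) unfolding supported_def by simp
  define t where "t j = a (stake (Suc j) (i ## X)) * lam ^ Suc j" for j
  have "t (Suc j) = lam * (subtree i a (stake (Suc j) X) * lam ^ Suc j)" for j
  proof -
    have "subtree i a (stake (Suc j) X) = a (i # stake (Suc j) X)"
      by (rule subtree_apply[OF a assms(2)]) simp
    moreover have "stake (Suc (Suc j)) (i ## X) = i # stake (Suc j) X" by simp
    ultimately show ?thesis unfolding t_def by (simp only: power_Suc mult_ac)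
  qed
  moreover have "(\<lambda>j. lam * (subtree i a (stake (Suc j) X) * lam ^ Suc j))
      sums (lam * stream_coding (subtree i a) X)"
    unfolding stream_coding_def
    by (intro sums_mult summable_sums summable_stream_coding supported_subtree assms)
  ultimately have "(\<lambda>j. t (Suc j)) sums (lam * stream_coding (subtree i a) X)" by simp
  then have "t sums (lam * stream_coding (subtree i a) X + t 0)" by (rule sums_Suc)
  then have "suminf t = lam * stream_coding (subtree i a) X + t 0"
    by (rule sums_unique[symmetric])
  moreover have "stream_coding a (i ## X) = suminf t"
    unfolding stream_coding_def t_def ..
  moreover have "t 0 = lam * a [i]"
    by (simp add: t_def)
  ultimately show ?thesis by (simp add: algebra_simps)
qed

lemma measure_random_measure_split:
  assumes "supported a" "A \<in> sets borel"
  shows "measure (\<mu> a) A =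
    (\<Sum>i\<in>{1..l}. measure (\<mu> (subtree i a)) {x. lam * a [i] + lam * x \<in> A}) / l"
proof -
  have a: "a \<in> space L" using assms(1) unfolding supported_def by simp
  have "measure (\<mu> a) A = measure S {X. stream_coding a X \<in> A}"
    by (rule measure_random_measure[OF a assms(2)])
  also have "\<dots> = (\<Sum>i\<in>{1..l}. measure S {X. i ## X \<in> {X. stream_coding a X \<in> A}}) / card {1..l}"
    using stream_coding_vimage_in_sets[OF a assms(2)] two_le_l
    by (intro measure_uniform_streams_split) auto
  also have "\<dots> = (\<Sum>i\<in>{1..l}. measure (\<mu> (subtree i a)) {x. lam * a [i] + lam * x \<in> A}) / l"
  proof -
    have "measure S {X. i ## X \<in> {X. stream_coding a X \<in> A}} =
        measure (\<mu> (subtree i a)) {x. lam * a [i] + lam * x \<in> A}" if "i \<in> {1..l}" for i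
      using measure_random_measure[OF subtree_in_space affine_vimage_in_sets_borel[OF assms(2)]]
        stream_coding_Cons[OF assms(1) that] by (simp add: distrib_left)
    then show ?thesis by simp
  qed
  finally show ?thesis .
qed

lemma singular_weight_le_mean:
  assumes "supported a"
  shows "singular_weight a \<le> (\<Sum>i\<in>{1..l}. singular_weight (subtree i a)) / l"
proof -
  have a: "a \<in> space L" using assms unfolding supported_def by simp
  obtain N where N: "N \<in> null_sets lborel" "measure (\<mu> a) N = singular_weight a"
    using singular_weight_attained[OF a] by blast
  have "singular_weight a =
      (\<Sum>i\<in>{1..l}. measure (\<mu> (subtree i a)) {x. lam * a [i] + lam * x \<in> N}) / l"
    using measure_random_measure_split[OF assms null_sets_lborel_in_sets_borel[OF N(1)]] N(2) by simp
  also have "\<dots> \<le> (\<Sum>i\<in>{1..l}. singular_weight (subtree i a)) / l"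
    using lam_pos N(1)
    by (intro divide_right_mono sum_mono measure_le_singular_weight subtree_in_space
        null_sets_lborel_affine_vimage) auto
  finally show ?thesis .
qed

lemma mean_le_singular_weight:
  assumes "supported a"
  shows "(\<Sum>i\<in>{1..l}. singular_weight (subtree i a)) / l \<le> singular_weight a"
proof -
  have a: "a \<in> space L" using assms unfolding supported_def by simp
  have "\<exists>N. N \<in> null_sets lborel \<and> measure (\<mu> (subtree i a)) N = singular_weight (subtree i a)" for i
    using singular_weight_attained[OF subtree_in_space] by blast
  then obtain N where N: "\<And>i. N i \<in> null_sets lborel"
    "\<And>i. measure (\<mu> (subtree i a)) (N i) = singular_weight (subtree i a)"
    by metis
  \<comment> \<open>Undo the affine maps: the images of the sets N i under x \<mapsto> lam * (a [i] + x) form one null set.\<close>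
  define M where "M = (\<Union>i\<in>{1..l}. {y. - a [i] + (1 / lam) * y \<in> N i})"
  have M: "M \<in> null_sets lborel"
    unfolding M_def using lam_pos N(1) by (intro null_sets.finite_UN null_sets_lborel_affine_vimage) auto
  have "singular_weight (subtree i a) \<le> measure (\<mu> (subtree i a)) {x. lam * a [i] + lam * x \<in> M}"
    if "i \<in> {1..l}" for i
  proof -
    interpret prob_space "\<mu> (subtree i a)" by (rule prob_space_random_measure[OF subtree_in_space])
    have "N i \<subseteq> {x. lam * a [i] + lam * x \<in> M}"
    proof
      fix y assume "y \<in> N i"
      moreover have "- a [i] + (1 / lam) * (lam * a [i] + lam * y) = y"
        using lam_pos by (simp add: field_simps)
      ultimately show "y \<in> {x. lam * a [i] + lam * x \<in> M}"
        using that unfolding M_def by (intro CollectI UN_I[of i]) auto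
    qed
    then show ?thesis
      unfolding N(2)[symmetric] using affine_vimage_in_sets_borel[OF null_sets_lborel_in_sets_borel[OF M]]
      by (intro finite_measure_mono) auto
  qed
  then have "(\<Sum>i\<in>{1..l}. singular_weight (subtree i a)) / l \<le>
      (\<Sum>i\<in>{1..l}. measure (\<mu> (subtree i a)) {x. lam * a [i] + lam * x \<in> M}) / l"
    by (intro divide_right_mono sum_mono) auto
  also have "\<dots> = measure (\<mu> a) M"
    using measure_random_measure_split[OF assms null_sets_lborel_in_sets_borel[OF M]] by simp
  also have "\<dots> \<le> singular_weight a"
    by (rule measure_le_singular_weight[OF a M])
  finally show ?thesis .
qed

lemma singular_weight_eq_mean:
  "supported a \<Longrightarrow> singular_weight a = (\<Sum>i\<in>{1..l}. singular_weight (subtree i a)) / l"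
  using singular_weight_le_mean mean_le_singular_weight by (rule antisym)

lemma indep_singular_weight_subtrees:
  "prob_space.indep_vars L (\<lambda>_. borel) (\<lambda>i a. singular_weight (subtree i a)) {1..l}"
proof -
  interpret prob_space "measure_pmf eta" by (rule prob_space_measure_pmf)
  interpret P: product_prob_space "\<lambda>_. measure_pmf eta" T ..
  define K where "K i = (\<lambda>w. i # w) ` T" for i :: nat
  have "[1] \<in> T" using two_le_l by (simp add: tree_vertices_def)
  then have "P.indep_vars (\<lambda>_. measure_pmf eta) (\<lambda>w a. a w) T"
    by (intro P.indep_vars_PiM_components) auto
  then have "P.indep_vars (\<lambda>i. \<Pi>\<^sub>M w\<in>K i. measure_pmf eta) (\<lambda>i a. restrict a (K i)) {1..l}"
    using Cons_in_tree_vertices by (intro P.indep_vars_restrict) (auto simp: K_def disjoint_family_on_def)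
  moreover have "(\<lambda>b. singular_weight (\<lambda>w\<in>T. b (i # w))) \<in> borel_measurable (\<Pi>\<^sub>M w\<in>K i. measure_pmf eta)"
    for i
  proof (rule measurable_compose[OF _ measurable_singular_weight])
    show "(\<lambda>b. \<lambda>w\<in>T. b (i # w)) \<in> measurable (\<Pi>\<^sub>M w\<in>K i. measure_pmf eta) L"
      unfolding label_space_def
      by (intro measurable_restrict measurable_component_singleton) (auto simp: K_def)
  qed
  ultimately have "P.indep_vars (\<lambda>_. borel)
      (\<lambda>i a. singular_weight (\<lambda>w\<in>T. restrict a (K i) (i # w))) {1..l}"
    by (rule P.indep_vars_compose2)
  moreover have "(\<lambda>w\<in>T. restrict a (K i) (i # w)) = subtree i a" for a i
    by (auto simp: subtree_def K_def)
  ultimately show ?thesis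
    by (simp add: label_space_def)
qed

lemma AE_singular_weight_eq_expectation:
  "AE a in L. singular_weight a = integral\<^sup>L L singular_weight"
proof -
  interpret prob_space L by (rule prob_space_L)
  have bounded: "\<bar>singular_weight a ^ 2\<bar> \<le> 1" if "a \<in> space L" for a
    using singular_weight_nonneg[of a] singular_weight_le_1[OF that] by (simp add: power_le_one)
  show ?thesis
  proof (rule AE_eq_expectation_if_mean_of_independent_copies)
    show "2 \<le> card {1..l}" using two_le_l by simp
    show "distr L borel (\<lambda>a. singular_weight (subtree i a)) = distr L borel singular_weight"
      if "i \<in> {1..l}" for i
      using distr_distr[OF measurable_singular_weight measurable_subtree[OF that]] distr_subtree[OF that]
      by (simp add: comp_def)
    show "integrable L (\<lambda>a. singular_weight a ^ 2)"
      using bounded measurable_singular_weight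
      by (intro integrable_const_bound[where B=1]) (auto intro: borel_measurable_power)
    show "AE a in L. singular_weight a = (\<Sum>i\<in>{1..l}. singular_weight (subtree i a)) / card {1..l}"
      using AE_supported by eventually_elim (simp add: singular_weight_eq_mean)
    show "indep_vars (\<lambda>_. borel) (\<lambda>i a. singular_weight (subtree i a)) {1..l}"
      by (rule indep_singular_weight_subtrees)
    show "singular_weight \<in> borel_measurable L" by (rule measurable_singular_weight)
  qed simp
qed

fun subtree_path :: "nat list \<Rightarrow> (nat list \<Rightarrow> real) \<Rightarrow> nat list \<Rightarrow> real" where
  "subtree_path [] a = a"
| "subtree_path (i # v) a = subtree_path v (subtree i a)"

lemma AE_singular_weight_subtree_path:
  assumes "AE a in L. singular_weight a = c"
  shows "AE a in L. \<forall>v\<in>lists {1..l}. singular_weight (subtree_path v a) = c"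
proof -
  have "AE a in L. singular_weight (subtree_path v a) = c" if "v \<in> lists {1..l}" for v
    using that
  proof (induction v)
    case (Cons i v)
    then have i: "i \<in> {1..l}" and IH: "AE a in L. singular_weight (subtree_path v a) = c"
      by auto
    have "AE a in distr L L (subtree i). singular_weight (subtree_path v a) = c"
      unfolding distr_subtree[OF i] by (rule IH)
    then show ?case
      using AE_distrD[OF measurable_subtree[OF i]] by simp
  qed (simp add: assms)
  then show ?thesis
    by (subst AE_ball_countable) auto
qed

lemma measure_subtree_affine_vimage_eq:
  assumes "supported b" "\<And>j. j \<in> {1..l} \<Longrightarrow> singular_weight (subtree j b) = c"
    and "N \<in> null_sets lborel" "measure (\<mu> b) N = c" and "i \<in> {1..l}"
  shows "measure (\<mu> (subtree i b)) {x. lam * b [i] + lam * x \<in> N} = c"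
  \<comment> \<open>Each piece carries at most mass c on a null set, and the pieces carry c on average.\<close>
proof (rule eq_if_mean_eq_upper_bound[where A="{1..l}", OF _ assms(5)])
  show "measure (\<mu> (subtree j b)) {x. lam * b [j] + lam * x \<in> N} \<le> c" if "j \<in> {1..l}" for j
  proof -
    have "{x. lam * b [j] + lam * x \<in> N} \<in> null_sets lborel"
      using lam_pos assms(3) by (intro null_sets_lborel_affine_vimage) auto
    then show ?thesis
      using measure_le_singular_weight[OF subtree_in_space] assms(2)[OF that] by metis
  qed
  show "(\<Sum>j\<in>{1..l}. measure (\<mu> (subtree j b)) {x. lam * b [j] + lam * x \<in> N}) / card {1..l} = c"
    using measure_random_measure_split[OF assms(1) null_sets_lborel_in_sets_borel[OF assms(3)]] assms(4)
    by simp
qed simp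

lemma measure_sstart_Int_stream_coding_vimage:
  assumes "supported b" "\<forall>v\<in>lists {1..l}. singular_weight (subtree_path v b) = c"
    and "N \<in> null_sets lborel" "measure (\<mu> b) N = c" and "v \<in> lists {1..l}"
  shows "measure S (sstart {1..l} v \<inter> {X. stream_coding b X \<in> N}) = c / l ^ length v"
  using assms
proof (induction v arbitrary: b N)
  case Nil
  have b: "b \<in> space L" using Nil.prems(1) unfolding supported_def by simp
  have N: "N \<in> sets borel" by (rule null_sets_lborel_in_sets_borel[OF Nil.prems(3)])
  show ?case
    using measure_uniform_streams_streams_Int[OF _ _ stream_coding_vimage_in_sets[OF b N]]
      measure_random_measure[OF b N] Nil.prems(4) two_le_l by simp
next
  case (Cons i v)
  have b: "b \<in> space L" and i: "i \<in> {1..l}" and v: "v \<in> lists {1..l}"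
    using Cons.prems unfolding supported_def by auto
  have N: "N \<in> sets borel" by (rule null_sets_lborel_in_sets_borel[OF Cons.prems(3)])
  define N' where "N' = {x. lam * b [i] + lam * x \<in> N}"
  have "measure S (sstart {1..l} (i # v) \<inter> {X. stream_coding b X \<in> N}) =
      measure S (sstart {1..l} v \<inter> {X. i ## X \<in> {X. stream_coding b X \<in> N}}) / card {1..l}"
    using stream_coding_vimage_in_sets[OF b N] i
    by (intro measure_uniform_streams_sstart_Cons_Int) auto
  also have "{X. i ## X \<in> {X. stream_coding b X \<in> N}} = {X. stream_coding (subtree i b) X \<in> N'}"
    using stream_coding_Cons[OF Cons.prems(1) i] by (simp add: N'_def distrib_left)
  also have "measure S (sstart {1..l} v \<inter> \<dots>) = c / l ^ length v"
  proof (rule Cons.IH)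
    show "\<forall>v\<in>lists {1..l}. singular_weight (subtree_path v (subtree i b)) = c"
      using Cons.prems(2) i by (metis Cons_in_lists_iff subtree_path.simps(2))
    show "N' \<in> null_sets lborel"
      unfolding N'_def using lam_pos Cons.prems(3) by (intro null_sets_lborel_affine_vimage) auto
    have "singular_weight (subtree j b) = c" if "j \<in> {1..l}" for j
      using Cons.prems(2)[rule_format, of "[j]"] that by simp
    then show "measure (\<mu> (subtree i b)) N' = c"
      unfolding N'_def by (rule measure_subtree_affine_vimage_eq[OF Cons.prems(1) _ Cons.prems(3,4) i])
    show "supported (subtree i b)" by (rule supported_subtree[OF Cons.prems(1) i])
  qed (rule v)
  finally show ?case by (simp add: mult.commute)
qed

lemma singular_weight_const_eq_0_or_1:
  assumes "AE a in L. singular_weight a = c"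
  shows "c = 0 \<or> c = 1"
proof -
  interpret L: prob_space L by (rule prob_space_L)
  have AE_paths: "AE b in L. supported b \<and> (\<forall>v\<in>lists {1..l}. singular_weight (subtree_path v b) = c)"
    using AE_supported AE_singular_weight_subtree_path[OF assms] by eventually_elim simp
  have "\<exists>b. supported b \<and> (\<forall>v\<in>lists {1..l}. singular_weight (subtree_path v b) = c)"
  proof (rule ccontr)
    assume none: "\<nexists>b. supported b \<and> (\<forall>v\<in>lists {1..l}. singular_weight (subtree_path v b) = c)"
    from AE_paths have "AE b in L. False" by eventually_elim (use none in blast)
    then show False by (simp add: L.AE_False)
  qed
  then obtain b where b: "supported b" "\<forall>v\<in>lists {1..l}. singular_weight (subtree_path v b) = c"
    by blast
  then have "b \<in> space L" unfolding supported_def by simp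
  moreover have "singular_weight b = c" using b(2) by (metis lists.Nil subtree_path.simps(1))
  ultimately obtain N where N: "N \<in> null_sets lborel" "measure (\<mu> b) N = c"
    using singular_weight_attained by metis
  define E where "E = {X. stream_coding b X \<in> N}"
  have E: "E \<in> sets S"
    unfolding E_def using stream_coding_vimage_in_sets[OF \<open>b \<in> space L\<close>] N(1)
    by (simp add: null_sets_lborel_in_sets_borel)
  have "measure S E = c"
    using measure_random_measure[OF \<open>b \<in> space L\<close> null_sets_lborel_in_sets_borel[OF N(1)]] N(2)
    by (simp add: E_def)
  moreover have "measure S (sstart {1..l} v \<inter> E) = measure S E * measure S (sstart {1..l} v)"
    if "v \<in> lists {1..l}" for v
    using measure_sstart_Int_stream_coding_vimage[OF b N that] that two_le_l \<open>measure S E = c\<close>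
    by (simp add: E_def measure_uniform_streams_sstart)
  ultimately show ?thesis
    using measure_uniform_streams_eq_0_or_1[OF _ _ E] two_le_l by auto
qed

lemma singular_mass_random_measure:
  "a \<in> space L \<Longrightarrow> singular_mass (\<mu> a) = ennreal (singular_weight a)"
  unfolding singular_weight_def using prob_space_random_measure
  by (intro ennreal_enn2real_singular_mass[symmetric]) (auto simp: prob_space_def)

theorem AE_absolutely_continuous_or_AE_singular:
  "(AE a in L. absolutely_continuous lborel (\<mu> a)) \<or> (AE a in L. singular_lebesgue (\<mu> a))"
proof -
  define c where "c = integral\<^sup>L L singular_weight"
  have c: "AE a in L. a \<in> space L \<and> singular_weight a = c"
    unfolding c_def using AE_singular_weight_eq_expectation by (auto elim: eventually_mono)
  then have "c = 0 \<or> c = 1"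
    by (intro singular_weight_const_eq_0_or_1) (auto elim: eventually_mono)
  then show ?thesis
  proof
    assume "c = 0"
    with c have "AE a in L. a \<in> space L \<and> singular_weight a = 0" by simp
    then have "AE a in L. absolutely_continuous lborel (\<mu> a)"
      by eventually_elim
        (simp add: absolutely_continuous_if_singular_mass_eq_0 singular_mass_random_measure)
    then show ?thesis ..
  next
    assume "c = 1"
    with c have "AE a in L. a \<in> space L \<and> singular_weight a = 1" by simp
    then have "AE a in L. singular_lebesgue (\<mu> a)"
      by eventually_elim
        (simp add: singular_lebesgue_if_singular_mass_eq_1 singular_mass_random_measure
          prob_space_random_measure)
    then show ?thesis ..
  qed
qed

end

theorem proposition2p3:
  fixes l :: nat and eta :: "real pmf" and lam :: real
  assumes "l \<ge> 2"
    and "finite (set_pmf eta)"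
    and "0 < lam" and "lam < 1"
  shows "(AE a in label_space l eta. absolutely_continuous lborel (random_measure l lam a))
       \<or> (AE a in label_space l eta. singular_lebesgue (random_measure l lam a))"
proof -
  interpret random_self_similar_measure l eta lam
    using assms by unfold_locales
  show ?thesis by (rule AE_absolutely_continuous_or_AE_singular)
qed

end
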